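(* Let $\theta \in \mathbb{R}^d\setminus\{0\}$, $b \in \mathbb{R}$, and let $f(z)=\sigma(\langle \theta, z\rangle + b)$ with $\sigma(u)=1/(1+e^{-u})$, the predicted label being $\hat y(z)=1$ if $\langle\theta,z\rangle+b\ge 0$ and $\hat y(z)=0$ otherwise. Fix a threshold $\epsilon\in(1/2,1)$ and let $g$ be the counterfactual-explanation map defined below. Let $x\in\mathbb{R}^d$ with $\langle\theta,x\rangle+b\neq 0$, let $c=g(x)$ (the CF) and $c'=g(c)$ (the CCF). Put $m=\frac{c+c'}{2}$, $v=c-c'$, and $s=+1$ if $\hat y(c)=1$, $s=-1$ if $\hat y(c)=0$. Define the substitute classifier $h:\mathbb{R}^d\to\{0,1\}$ by $h(z)=1$ if $s\,\langle v, z-m\rangle\ge 0$ and $h(z)=0$ otherwise. Then $v\neq 0$, $m$ lies on the decision boundary $\{z:\langle\theta,z\rangle+b=0\}$, and $h(z)=\hat y(z)$ for every $z\in\mathbb{R}^d$; i.e. a substitute model with $100\%$ agreement with $f$ is obtained from the single pair $(c,c')$ together with their predicted labels, without any training.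
   Context: Counterfactual explanation map: for an input $z$ with predicted label $\ell=\hat y(z)$, $g(z)$ is the point closest to $z$ in Euclidean distance whose predicted probability of the opposite class $1-\ell$ is at least $\epsilon$; that is, with $t=\log\frac{\epsilon}{1-\epsilon}>0$, $g(z)=\arg\min\{\|w-z\|_2 : \langle\theta,w\rangle+b\ge t\}$ if $\ell=0$, and $g(z)=\arg\min\{\|w-z\|_2 : \langle\theta,w\rangle+b\le -t\}$ if $\ell=1$ (equivalently, $g(z)$ is obtained by moving from $z$ along $\pm\theta$, the gradient direction, until the target-class probability reaches $\epsilon$). The CCF of $x$ is the counterfactual explanation of its counterfactual explanation, $g(g(x))$. The attacker has access only to $c$, $c'$ and their predicted labels, not to $\theta$ or $b$. *)

theory Defs
  imports "HOL-Analysis.Analysis"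
begin

definition sigmoid :: "real \<Rightarrow> real" where
  "sigmoid u = 1 / (1 + exp (- u))"

definition logit_model :: "real ^ 'n \<Rightarrow> real \<Rightarrow> real ^ 'n \<Rightarrow> real" where
  "logit_model \<theta> b z = sigmoid (\<theta> \<bullet> z + b)"

definition pred_label :: "real ^ 'n \<Rightarrow> real \<Rightarrow> real ^ 'n \<Rightarrow> nat" where
  "pred_label \<theta> b z = (if \<theta> \<bullet> z + b \<ge> 0 then 1 else 0)"

text \<open>Counterfactual explanation map with threshold eps, t = log(eps/(1-eps)):
  the Euclidean-closest point in the half-space where the opposite class
  has probability at least eps.\<close>
definition cf_map :: "real ^ 'n \<Rightarrow> real \<Rightarrow> real \<Rightarrow> real ^ 'n \<Rightarrow> real ^ 'n" where
  "cf_map \<theta> b \<epsilon> z =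
     (let t = ln (\<epsilon> / (1 - \<epsilon>)) in
      if pred_label \<theta> b z = 0
      then closest_point {w. \<theta> \<bullet> w + b \<ge> t} z
      else closest_point {w. \<theta> \<bullet> w + b \<le> - t} z)"

end

theory Submission
  imports Defs
begin

text \<open>The counterfactual map is the Euclidean projection onto a half-space bounded by a level
  set of the score \<open>\<langle>\<theta>,z\<rangle> + b\<close>, so it moves a point along \<open>\<theta>\<close> to score \<open>-t\<close>
  (if its label is 1) or \<open>t\<close> (if it is 0), where \<open>t > 0\<close>. Hence the CF \<open>c\<close> and the CCF \<open>c'\<close>
  have opposite nonzero scores, \<open>c - c'\<close> is a nonzero multiple of \<open>\<theta>\<close>, the midpoint has score
  0, and the sign of the score of \<open>c\<close>, read off from its label, orients \<open>c - c'\<close> like \<open>\<theta>\<close>.\<close>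

lemma closest_point_halfspace_ge:
  fixes a z :: "'a::{real_inner,heine_borel}"
  assumes "a \<noteq> 0" and "inner a z \<le> r"
  shows "closest_point {w. r \<le> inner a w} z = z + ((r - inner a z) / inner a a) *\<^sub>R a"
proof -
  define p where "p = z + ((r - inner a z) / inner a a) *\<^sub>R a"
  have aa: "inner a a = norm a * norm a"
    by (metis dot_square_norm power2_eq_square)
  have norm_a: "norm a > 0"
    using assms(1) by simp
  have "inner a p = r"
    using assms(1) by (simp add: p_def inner_add_right)
  moreover have dist_p: "dist z p = (r - inner a z) / norm a"
  proof -
    have "dist z p = (r - inner a z) / inner a a * norm a"
      using assms(2) by (simp add: p_def dist_norm)
    then show ?thesis
      unfolding aa using norm_a by simp
  qed
  moreover have "dist z p \<le> dist z y" if "r \<le> inner a y" for y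
  proof -
    have "r - inner a z \<le> inner a (y - z)"
      using that by (simp add: inner_diff_right)
    also have "\<dots> \<le> norm a * dist z y"
      by (simp add: dist_norm norm_minus_commute norm_cauchy_schwarz)
    finally show ?thesis
      using norm_a by (simp add: dist_p divide_le_eq mult.commute)
  qed
  ultimately have "p = closest_point {w. r \<le> inner a w} z"
    by (intro closest_point_unique convex_halfspace_ge closed_halfspace_ge) auto
  then show ?thesis
    by (simp add: p_def)
qed

lemma closest_point_halfspace_le:
  fixes a z :: "'a::{real_inner,heine_borel}"
  assumes "a \<noteq> 0" and "r \<le> inner a z"
  shows "closest_point {w. inner a w \<le> r} z = z + ((r - inner a z) / inner a a) *\<^sub>R a"
proof -
  have "{w. inner a w \<le> r} = {w. - r \<le> inner (- a) w}"
    by auto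
  moreover have "(- r - inner (- a) z) / inner (- a) (- a) = - ((r - inner a z) / inner a a)"
    by (simp add: minus_divide_left)
  ultimately show ?thesis
    using closest_point_halfspace_ge[of "- a" z "- r"] assms by simp
qed

lemma scaled_normal_halfspace_iff:
  fixes a v m z :: "'a::real_inner"
  assumes "v = k *\<^sub>R a" and "0 < s * k" and "inner a m + b = 0"
  shows "0 \<le> s * inner v (z - m) \<longleftrightarrow> 0 \<le> inner a z + b"
proof -
  have "inner a m = - b"
    using assms(3) by simp
  then have eq: "s * inner v (z - m) = (s * k) * (inner a z + b)"
    using assms(1) by (simp add: inner_diff_right algebra_simps)
  have "0 \<le> (s * k) * (inner a z + b) \<longleftrightarrow> 0 \<le> inner a z + b"
    using mult_le_cancel_left_pos[OF assms(2), of 0 "inner a z + b"] by (simp only: mult_zero_right)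
  then show ?thesis
    by (simp only: eq)
qed

lemma cf_threshold_pos:
  fixes \<epsilon> :: real
  assumes "1/2 < \<epsilon>" and "\<epsilon> < 1"
  shows "0 < ln (\<epsilon> / (1 - \<epsilon>))"
proof -
  have "1 < \<epsilon> / (1 - \<epsilon>)"
    using assms by (simp add: field_simps)
  then show ?thesis
    by simp
qed

lemma cf_map_eq:
  fixes \<theta> z :: "real ^ 'n"
  assumes "\<theta> \<noteq> 0" and "1/2 < \<epsilon>" and "\<epsilon> < 1"
  defines "t \<equiv> ln (\<epsilon> / (1 - \<epsilon>))"
  shows "cf_map \<theta> b \<epsilon> z
    = z + (((if 0 \<le> \<theta> \<bullet> z + b then - t else t) - (\<theta> \<bullet> z + b)) / (\<theta> \<bullet> \<theta>)) *\<^sub>R \<theta>"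
proof -
  have "0 < t"
    unfolding t_def using assms(2,3) by (rule cf_threshold_pos)
  show ?thesis
  proof (cases "0 \<le> \<theta> \<bullet> z + b")
    case True
    have "cf_map \<theta> b \<epsilon> z = closest_point {w. \<theta> \<bullet> w + b \<le> - t} z"
      using True by (simp add: cf_map_def pred_label_def t_def)
    also have "{w. \<theta> \<bullet> w + b \<le> - t} = {w. \<theta> \<bullet> w \<le> - t - b}"
      by (auto simp: algebra_simps)
    also have "closest_point \<dots> z = z + ((- t - b - \<theta> \<bullet> z) / (\<theta> \<bullet> \<theta>)) *\<^sub>R \<theta>"
      using True \<open>0 < t\<close> by (intro closest_point_halfspace_le assms(1)) simp
    finally show ?thesis
      using True by (simp add: diff_diff_eq)
  next
    case False
    have "cf_map \<theta> b \<epsilon> z = closest_point {w. t \<le> \<theta> \<bullet> w + b} z"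
      using False by (simp add: cf_map_def pred_label_def t_def)
    also have "{w. t \<le> \<theta> \<bullet> w + b} = {w. t - b \<le> \<theta> \<bullet> w}"
      by (auto simp: algebra_simps)
    also have "closest_point \<dots> z = z + ((t - b - \<theta> \<bullet> z) / (\<theta> \<bullet> \<theta>)) *\<^sub>R \<theta>"
      using False \<open>0 < t\<close> by (intro closest_point_halfspace_ge assms(1)) simp
    finally show ?thesis
      using False by (simp add: diff_diff_eq)
  qed
qed

lemma inner_cf_map:
  fixes \<theta> z :: "real ^ 'n"
  assumes "\<theta> \<noteq> 0" and "1/2 < \<epsilon>" and "\<epsilon> < 1"
  defines "t \<equiv> ln (\<epsilon> / (1 - \<epsilon>))"
  shows "\<theta> \<bullet> cf_map \<theta> b \<epsilon> z + b = (if 0 \<le> \<theta> \<bullet> z + b then - t else t)"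
  using assms(1) by (simp add: cf_map_eq[OF assms(1-3)] t_def inner_add_right)

lemma cf_map_shift:
  fixes \<theta> z :: "real ^ 'n"
  assumes "\<theta> \<noteq> 0" and "1/2 < \<epsilon>" and "\<epsilon> < 1"
  shows "cf_map \<theta> b \<epsilon> z
    = z + (((\<theta> \<bullet> cf_map \<theta> b \<epsilon> z + b) - (\<theta> \<bullet> z + b)) / (\<theta> \<bullet> \<theta>)) *\<^sub>R \<theta>"
  unfolding inner_cf_map[OF assms] by (rule cf_map_eq[OF assms])

theorem mainTheorem1:
  fixes \<theta> x :: "real ^ 'n" and b \<epsilon> :: real
  assumes "\<theta> \<noteq> 0"
    and "1/2 < \<epsilon>" and "\<epsilon> < 1"
    and "\<theta> \<bullet> x + b \<noteq> 0"
  shows "let c = cf_map \<theta> b \<epsilon> x;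
             c' = cf_map \<theta> b \<epsilon> c;
             m = (1/2) *\<^sub>R (c + c');
             v = c - c';
             s = (if pred_label \<theta> b c = 1 then 1 else (-1::real));
             h = (\<lambda>z. if s * (v \<bullet> (z - m)) \<ge> 0 then (1::nat) else 0)
         in v \<noteq> 0 \<and> \<theta> \<bullet> m + b = 0 \<and> (\<forall>z. h z = pred_label \<theta> b z)"
proof -
  define c where "c = cf_map \<theta> b \<epsilon> x"
  define c' where "c' = cf_map \<theta> b \<epsilon> c"
  define s where "s = (if pred_label \<theta> b c = 1 then 1 else (-1::real))"
  define k where "k = ((\<theta> \<bullet> c + b) - (\<theta> \<bullet> c' + b)) / (\<theta> \<bullet> \<theta>)"
  have t: "0 < ln (\<epsilon> / (1 - \<epsilon>))"
    using assms(2,3) by (rule cf_threshold_pos)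
  have score_c: "\<theta> \<bullet> c + b \<noteq> 0"
    using t by (simp add: c_def inner_cf_map[OF assms(1-3)])
  have score_c': "\<theta> \<bullet> c' + b = - (\<theta> \<bullet> c + b)"
    using t by (simp add: c_def c'_def inner_cf_map[OF assms(1-3)])
  have "c' = c + (- k) *\<^sub>R \<theta>"
    unfolding c'_def k_def minus_divide_left minus_diff_eq by (rule cf_map_shift[OF assms(1-3)])
  then have v: "c - c' = k *\<^sub>R \<theta>"
    by simp
  have sk: "0 < s * k"
    using score_c assms(1) by (auto simp: s_def k_def score_c' pred_label_def zero_less_mult_iff)
  have m: "\<theta> \<bullet> ((1/2) *\<^sub>R (c + c')) + b = 0"
    using score_c' by (simp add: inner_add_right algebra_simps)
  have "c - c' \<noteq> 0"
    using v sk assms(1) by auto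
  then show ?thesis
    using scaled_normal_halfspace_iff[OF v sk m] m
    unfolding Let_def c_def[symmetric] c'_def[symmetric] s_def[symmetric]
    by (simp add: pred_label_def)
qed

end
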